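(* Let $X$ be the real harmonizable multifractional stable process and $T>0$. There exist $\delta,C_1,C_2>0$ such that for all $t,s\in[0,T]$ with $|t-s|<\delta$, $$C_1|t-s|^{\hat H(t,s)}\le\|X(t)-X(s)\|_\alpha\le C_2|t-s|^{\check H(t,s)},$$ where $\hat H(t,s)=\min_{u\in[s\wedge t,s\vee t]}H(u)$ and $\check H(t,s)=\max_{u\in[s\wedge t,s\vee t]}H(u)$.
   Context: Fix $\alpha\in(1,2)$. $M$ is an independently scattered rotationally invariant complex S$\alpha$S random measure on $\mathbb R$ with Lebesgue control measure: for every Borel $A$ and $\theta\in\mathbb R$, $e^{i\theta}M(A)\overset{d}{=}M(A)$, $\mathbb E e^{iu\,\mathrm{Re} M(A)}=e^{-\lambda(A)|u|^\alpha}$; values on disjoint Borel subsets of $[0,\infty)$ are independent; $M(-A)=\overline{M(A)}$. For $f$ with $f(-x)=\overline{f(x)}$, $f\in L^\alpha(\mathbb R)$, $\int f\,dM$ is real S$\alpha$S with $\mathbb E\exp(iu\int f dM)=\exp(-|u|^\alpha\|f\|^\alpha_{L^\alpha})$; $\|\xi\|_\alpha^\alpha:=-\log\mathbb Ee^{i\xi}$, so $\|\int f dM\|_\alpha=\|f\|_{L^\alpha}$. The Hurst function $H:[0,\infty)\to\mathbb R$ satisfies $0<\hat H:=\inf_t H(t)\le\sup_tH(t)=:\check H<1$, and there are $C>0$ and $\gamma>\check H$ with $|H(t)-H(s)|\le C|t-s|^\gamma$ for all $t,s\ge0$. The real harmonizable multifractional stable process (rhmsp) is $X(t)=\int_{\mathbb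 R}\frac{e^{itx}-1}{|x|^{1/\alpha+H(t)}}M(dx)$, $t\ge0$. *)

theory Defs
  imports "HOL-Analysis.Analysis"
begin

definition rhmsp_kernel :: "real \<Rightarrow> (real \<Rightarrow> real) \<Rightarrow> real \<Rightarrow> real \<Rightarrow> complex" where
  "rhmsp_kernel \<alpha> H t x =
     (exp (\<i> * complex_of_real (t * x)) - 1) / complex_of_real (\<bar>x\<bar> powr (1 / \<alpha> + H t))"

text \<open>Scale parameter of the real S-alpha-S variable X(t) - X(s) = \<integral> (f_t - f_s) dM,
  i.e. the L^alpha(Lebesgue) norm of f_t - f_s (the isometry stated in the context).\<close>
definition rhmsp_incr_norm :: "real \<Rightarrow> (real \<Rightarrow> real) \<Rightarrow> real \<Rightarrow> real \<Rightarrow> real" where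
  "rhmsp_incr_norm \<alpha> H t s =
     (integral\<^sup>L lborel (\<lambda>x. cmod (rhmsp_kernel \<alpha> H t x - rhmsp_kernel \<alpha> H s x) powr \<alpha>)) powr (1 / \<alpha>)"

definition H_min :: "(real \<Rightarrow> real) \<Rightarrow> real \<Rightarrow> real \<Rightarrow> real" where
  "H_min H t s = (INF u\<in>{min s t..max s t}. H u)"

definition H_max :: "(real \<Rightarrow> real) \<Rightarrow> real \<Rightarrow> real \<Rightarrow> real" where
  "H_max H t s = (SUP u\<in>{min s t..max s t}. H u)"

end

theory Submission
  imports Defs "HOL-Probability.Characteristic_Functions"
begin

text \<open>
  Write f_t(x) = (e^{itx} - 1) |x|^{-1/alpha - H(t)} for the kernel of X(t), so that
  the alpha-th power of the scale parameter of X(t) - X(s) is the integral of |f_t - f_s|^alpha.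
  Put h = t - s and split f_t - f_s = A + B with
    A = (e^{itx} - e^{isx}) |x|^{-1/alpha - H(t)},   |A| = |e^{ihx} - 1| |x|^{-1/alpha - H(t)},
    B = (e^{isx} - 1) (|x|^{-1/alpha - H(t)} - |x|^{-1/alpha - H(s)}).
  By the quasi-triangle inequality for the alpha-th power the moment of the increment is comparable
  to the integral of |A|^alpha up to the integral of |B|^alpha. The substitution x = y / h shows that
  the former equals |h|^{alpha H(t)} times a quantity bounded above and below, and perturbing the
  exponent gives a bound K |H(t) - H(s)|^alpha for the latter. Since H is gamma-Hoelder with
  gamma > sup H, the correction is negligible for small |h|, so the scale parameter is comparable
  to |t - s|^{H(t)}. Finally, between s and t the values of H stay within C |t - s|^gamma of H(t)
  and |t - s|^{-C |t - s|^gamma} is bounded, so H(t) may be replaced by the minimum respectively the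
  maximum of H over the interval between s and t.
\<close>

definition chord :: "real \<Rightarrow> real" where
  "chord y = cmod (exp (\<i> * complex_of_real y) - 1)"

lemma chord_measurable [measurable]: "chord \<in> borel_measurable borel"
  unfolding chord_def by measurable

lemma chord_nonneg: "0 \<le> chord y"
  by (simp add: chord_def)

lemma chord_le_2: "chord y \<le> 2"
  unfolding chord_def using norm_triangle_ineq4[of "exp (\<i> * complex_of_real y)" 1] by simp

lemma chord_le_abs: "chord y \<le> \<bar>y\<bar>"
  unfolding chord_def using iexp_approx1[of y 0] by simp

lemma chord_ge_1:
  assumes "cos y \<le> 0"
  shows "1 \<le> chord y"
proof -
  have "Re (exp (\<i> * complex_of_real y) - 1) = cos y - 1"
    by (simp add: Re_exp)
  with abs_Re_le_cmod[of "exp (\<i> * complex_of_real y) - 1"] assms show ?thesis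
    by (simp add: chord_def)
qed

lemma abs_exp_minus_one_le: "\<bar>exp w - 1\<bar> \<le> \<bar>w\<bar> * exp \<bar>w\<bar>" for w :: real
proof -
  have "1 - w \<le> exp (-w)" using exp_ge_add_one_self[of "-w"] by simp
  then have "exp w * (1 - w) \<le> exp w * exp (-w)" by (rule mult_left_mono) simp
  then have upper: "exp w - 1 \<le> w * exp w" by (simp add: exp_minus algebra_simps)
  have "w * exp w \<le> \<bar>w\<bar> * exp \<bar>w\<bar>"
    by (cases "w \<ge> 0") (auto intro: order_trans[of _ 0] simp: mult_nonpos_nonneg)
  moreover have "1 \<le> exp \<bar>w\<bar>" by simp
  then have "\<bar>w\<bar> \<le> \<bar>w\<bar> * exp \<bar>w\<bar>" using mult_left_mono[of 1 "exp \<bar>w\<bar>" "\<bar>w\<bar>"] by simp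
  moreover have "1 + w \<le> exp w" by (rule exp_ge_add_one_self)
  ultimately show ?thesis using upper by linarith
qed

lemma powr_exponent_diff_le:
  fixes y a b e :: real
  assumes y: "y > 0" and e: "e > 0" and ab: "\<bar>a - b\<bar> \<le> e"
  shows "\<bar>y powr (-a) - y powr (-b)\<bar> \<le> \<bar>a - b\<bar> / e * (y powr (-b + 2*e) + y powr (-b - 2*e))"
proof -
  define L where "L = ln y"
  define w where "w = (b - a) * L"
  have eL: "e * \<bar>L\<bar> \<le> exp (e * \<bar>L\<bar>)"
    using exp_ge_add_one_self[of "e * \<bar>L\<bar>"] by linarith
  have w: "\<bar>w\<bar> \<le> e * \<bar>L\<bar>"
    using ab by (simp add: w_def abs_mult abs_minus_commute mult_right_mono)
  have "\<bar>exp w - 1\<bar> \<le> \<bar>a - b\<bar> / e * (e * \<bar>L\<bar>) * exp (e * \<bar>L\<bar>)"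
  proof -
    have "\<bar>w\<bar> * exp \<bar>w\<bar> \<le> \<bar>a - b\<bar> * \<bar>L\<bar> * exp (e * \<bar>L\<bar>)"
      using w by (intro mult_mono) (auto simp: w_def abs_mult abs_minus_commute)
    then show ?thesis using abs_exp_minus_one_le[of w] e by simp
  qed
  also have "\<dots> \<le> \<bar>a - b\<bar> / e * exp (e * \<bar>L\<bar>) * exp (e * \<bar>L\<bar>)"
    using e eL by (intro mult_right_mono mult_left_mono) auto
  also have "\<dots> = \<bar>a - b\<bar> / e * exp (2*e*\<bar>L\<bar>)"
    by (simp add: mult.assoc flip: exp_add)
  also have "\<dots> \<le> \<bar>a - b\<bar> / e * (exp (2*e*L) + exp (-(2*e*L)))"
  proof (rule mult_left_mono)
    show "exp (2*e*\<bar>L\<bar>) \<le> exp (2*e*L) + exp (-(2*e*L))"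
      by (cases "L \<ge> 0") auto
  qed (use e in simp)
  finally have bound: "\<bar>exp w - 1\<bar> \<le> \<bar>a - b\<bar> / e * (exp (2*e*L) + exp (-(2*e*L)))" .
  have "y powr (-a) - y powr (-b) = exp (-b*L) * (exp w - 1)"
    using y by (simp add: powr_def L_def w_def algebra_simps flip: exp_add)
  then have "\<bar>y powr (-a) - y powr (-b)\<bar> = exp (-b*L) * \<bar>exp w - 1\<bar>"
    by (simp add: abs_mult)
  also have "\<dots> \<le> exp (-b*L) * (\<bar>a - b\<bar> / e * (exp (2*e*L) + exp (-(2*e*L))))"
    using bound by (rule mult_left_mono) simp
  also have "\<dots> = \<bar>a - b\<bar> / e * (y powr (-b + 2*e) + y powr (-b - 2*e))"
    using y by (simp add: powr_def L_def algebra_simps flip: exp_add)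
  finally show ?thesis .
qed

lemma integrable_powr_unit_interval:
  fixes p :: real
  assumes "p > -1"
  shows "integrable lborel (\<lambda>x::real. indicator {0..1} x * x powr p)"
proof -
  have "set_integrable lebesgue {0..1} (\<lambda>x::real. x powr p)"
    using assms by (intro nonnegative_absolutely_integrable_1 integrable_on_powr_from_0) auto
  then show ?thesis
    by (simp add: set_integrable_def integrable_completion)
qed

lemma integrable_powr_tail:
  fixes p :: real
  assumes "p < -1"
  shows "integrable lborel (\<lambda>x::real. indicator {1..} x * x powr p)"
proof -
  have "(\<lambda>x::real. x powr p) integrable_on {1..}"
    using has_integral_powr_to_inf[OF assms, of 1] by (auto simp: integrable_on_def)
  then have "set_integrable lebesgue {1..} (\<lambda>x::real. x powr p)"
    by (intro nonnegative_absolutely_integrable_1) auto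
  then show ?thesis
    by (simp add: set_integrable_def integrable_completion)
qed

lemma integrable_bounded_by_multiple:
  fixes f g :: "'a \<Rightarrow> real"
  assumes "integrable M g" "f \<in> borel_measurable M" "\<And>x. 0 \<le> f x" "\<And>x. f x \<le> c * g x"
  shows "integrable M f" and "integral\<^sup>L M f \<le> c * integral\<^sup>L M g"
proof -
  have "integrable M (\<lambda>x. c * g x)" using assms(1) by simp
  then show f: "integrable M f"
  proof (rule Bochner_Integration.integrable_bound)
    show "AE x in M. norm (f x) \<le> norm (c * g x)"
      using assms(3,4) by (intro AE_I2) (metis abs_ge_self abs_of_nonneg order_trans real_norm_def)
  qed (use assms(2) in simp)
  have "integral\<^sup>L M f \<le> integral\<^sup>L M (\<lambda>x. c * g x)"
    using f assms by (intro integral_mono) auto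
  then show "integral\<^sup>L M f \<le> c * integral\<^sup>L M g" by simp
qed

definition pole_weight :: "real \<Rightarrow> real \<Rightarrow> real \<Rightarrow> real" where
  "pole_weight a q x = (if \<bar>x\<bar> \<le> 1 then \<bar>x\<bar> powr (a - 1 - q) else \<bar>x\<bar> powr (-1 - q))"

lemma pole_weight_measurable [measurable]: "pole_weight a q \<in> borel_measurable borel"
  unfolding pole_weight_def by measurable

lemma pole_weight_nonneg: "0 \<le> pole_weight a q x"
  by (simp add: pole_weight_def)

text \<open>Near the origin the exponent a - 1 - q exceeds -1, at infinity -1 - q is below -1.\<close>

lemma pole_weight_integrable:
  assumes "0 < q" "q < a"
  shows "integrable lborel (pole_weight a q)"
proof -
  define P where "P x = indicator {0..1} x * x powr (a - 1 - q) + indicator {1..} x * x powr (-1 - q)"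
    for x :: real
  have "integrable lborel P"
    unfolding P_def using assms
    by (intro Bochner_Integration.integrable_add integrable_powr_unit_interval integrable_powr_tail) auto
  then have P_reflected: "integrable lborel (\<lambda>x. P (0 + (-1) * x))"
    by (rule lborel_integrable_real_affine) simp
  have "integrable lborel (\<lambda>x. P x + P (0 + (-1) * x))"
    using \<open>integrable lborel P\<close> P_reflected by simp
  then show ?thesis
  proof (rule Bochner_Integration.integrable_bound)
    show "AE x in lborel. norm (pole_weight a q x) \<le> norm (P x + P (0 + (-1) * x))"
      by (intro AE_I2) (auto simp: pole_weight_def P_def indicator_def)
  qed simp
qed

lemma pole_weight_between:
  assumes "q1 \<le> q" "q \<le> q2"
  shows "pole_weight a q x \<le> pole_weight a q1 x + pole_weight a q2 x"
proof (cases "\<bar>x\<bar> \<le> 1")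
  case True
  then have "\<bar>x\<bar> powr (a - 1 - q) \<le> \<bar>x\<bar> powr (a - 1 - q2)"
    using assms by (intro powr_mono') auto
  then show ?thesis
    using True by (simp add: pole_weight_def add_increasing)
next
  case False
  then have "\<bar>x\<bar> powr (- 1 - q) \<le> \<bar>x\<bar> powr (- 1 - q1)"
    using assms by (intro powr_mono) auto
  then show ?thesis
    using False by (simp add: pole_weight_def add_increasing2)
qed

text \<open>Using chord y <= |y| near the origin and chord y <= 2 at infinity.\<close>

lemma chord_powr_le_pole_weight:
  fixes h L x a q :: real
  assumes a: "a > 0" and hL: "\<bar>h\<bar> \<le> L"
  shows "chord (h * x) powr a * \<bar>x\<bar> powr (-1 - q) \<le> (L powr a + 2 powr a) * pole_weight a q x"
proof (cases "\<bar>x\<bar> \<le> 1")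
  case True
  have L: "0 \<le> L" using hL by linarith
  have "chord (h * x) \<le> \<bar>h\<bar> * \<bar>x\<bar>"
    using chord_le_abs[of "h * x"] by (simp add: abs_mult)
  also have "\<dots> \<le> L * \<bar>x\<bar>"
    using hL by (rule mult_right_mono) simp
  finally have "chord (h * x) powr a \<le> (L * \<bar>x\<bar>) powr a"
    using a chord_nonneg by (intro powr_mono2) auto
  also have "\<dots> = L powr a * \<bar>x\<bar> powr a"
    using L by (simp add: powr_mult)
  finally have "chord (h * x) powr a * \<bar>x\<bar> powr (-1 - q) \<le> L powr a * (\<bar>x\<bar> powr a * \<bar>x\<bar> powr (-1 - q))"
    unfolding mult.assoc[symmetric] by (rule mult_right_mono) simp
  also have "\<dots> = L powr a * \<bar>x\<bar> powr (a - 1 - q)"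
    using powr_add[of "\<bar>x\<bar>" a "-1 - q"] by (simp add: algebra_simps)
  also have "\<dots> \<le> (L powr a + 2 powr a) * \<bar>x\<bar> powr (a - 1 - q)"
    by (rule mult_right_mono) simp_all
  finally show ?thesis using True by (simp add: pole_weight_def)
next
  case False
  have "chord (h * x) powr a \<le> 2 powr a"
    using a chord_nonneg chord_le_2 by (intro powr_mono2) auto
  then have "chord (h * x) powr a \<le> L powr a + 2 powr a"
    by (simp add: add_increasing)
  then have "chord (h * x) powr a * \<bar>x\<bar> powr (-1 - q) \<le> (L powr a + 2 powr a) * \<bar>x\<bar> powr (-1 - q)"
    by (rule mult_right_mono) simp
  then show ?thesis using False by (simp add: pole_weight_def)
qed

lemma powr_add_le:
  fixes u v p :: real
  assumes "u \<ge> 0" "v \<ge> 0" "p > 0"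
  shows "(u + v) powr p \<le> 2 powr p * (u powr p + v powr p)"
proof -
  have "(u + v) powr p \<le> (2 * max u v) powr p"
    using assms by (intro powr_mono2) auto
  also have "\<dots> = 2 powr p * max u v powr p"
    using assms by (simp add: powr_mult)
  also have "\<dots> \<le> 2 powr p * (u powr p + v powr p)"
    using assms by (intro mult_left_mono) (auto simp: max_def)
  finally show ?thesis .
qed

text \<open>Splitting of the kernel increment: for t, s the increment equals A + B, where
  |A|^alpha is the main part with p = alpha H(t) and h = t - s, and |B|^alpha is the correction
  coming from the change of the Hurst exponent between s and t.\<close>

definition main_part :: "real \<Rightarrow> real \<Rightarrow> real \<Rightarrow> real \<Rightarrow> real" where
  "main_part \<alpha> p h x = chord (h * x) powr \<alpha> * \<bar>x\<bar> powr (-1 - p)"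

definition correction :: "real \<Rightarrow> real \<Rightarrow> real \<Rightarrow> real \<Rightarrow> real \<Rightarrow> real" where
  "correction \<alpha> s u v x =
     chord (s * x) powr \<alpha> * \<bar>\<bar>x\<bar> powr (-(1/\<alpha> + u)) - \<bar>x\<bar> powr (-(1/\<alpha> + v))\<bar> powr \<alpha>"

lemma main_part_measurable [measurable]: "main_part \<alpha> p h \<in> borel_measurable borel"
  unfolding main_part_def by measurable

lemma correction_measurable [measurable]: "correction \<alpha> s u v \<in> borel_measurable borel"
  unfolding correction_def by measurable

lemma kernel_increment_split:
  fixes \<alpha> t s x :: real and H :: "real \<Rightarrow> real"
  assumes a: "\<alpha> > 0"
  defines "G \<equiv> cmod (rhmsp_kernel \<alpha> H t x - rhmsp_kernel \<alpha> H s x) powr \<alpha>"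
    and "A \<equiv> main_part \<alpha> (\<alpha> * H t) (t - s) x"
    and "B \<equiv> correction \<alpha> s (H t) (H s) x"
  shows "G \<le> 2 powr \<alpha> * (A + B)" and "A \<le> 2 powr \<alpha> * (G + B)"
proof -
  define P where "P = \<bar>x\<bar> powr (-(1/\<alpha> + H t))"
  define Q where "Q = \<bar>x\<bar> powr (-(1/\<alpha> + H s))"
  define et where "et = exp (\<i> * complex_of_real (t * x))"
  define es where "es = exp (\<i> * complex_of_real (s * x))"
  define a where "a = (et - es) * complex_of_real P"
  define b where "b = (es - 1) * complex_of_real (P - Q)"
  have kernel: "rhmsp_kernel \<alpha> H r x = (exp (\<i> * complex_of_real (r * x)) - 1) * \<bar>x\<bar> powr (-(1/\<alpha> + H r))"
    for r
    unfolding rhmsp_kernel_def powr_minus by (simp add: divide_inverse flip: of_real_inverse)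
  have sum: "rhmsp_kernel \<alpha> H t x - rhmsp_kernel \<alpha> H s x = a + b"
    unfolding kernel a_def b_def P_def Q_def et_def es_def by (simp add: algebra_simps)
  have "et - es = es * (exp (\<i> * complex_of_real ((t - s) * x)) - 1)"
    unfolding et_def es_def by (simp add: algebra_simps flip: exp_add)
  then have "cmod a = chord ((t - s) * x) * P"
    unfolding a_def chord_def es_def by (simp add: norm_mult P_def)
  moreover have "P powr \<alpha> = \<bar>x\<bar> powr (-1 - \<alpha> * H t)"
  proof -
    have "-(1/\<alpha> + H t) * \<alpha> = -1 - \<alpha> * H t" using a by (simp add: field_simps)
    then show ?thesis by (simp add: P_def powr_powr)
  qed
  ultimately have A: "A = cmod a powr \<alpha>"
    by (simp add: A_def main_part_def P_def powr_mult chord_nonneg)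
  have "cmod b = chord (s * x) * \<bar>P - Q\<bar>"
    unfolding b_def chord_def es_def by (simp add: norm_mult flip: of_real_diff)
  then have B: "B = cmod b powr \<alpha>"
    by (simp add: B_def correction_def P_def Q_def powr_mult chord_nonneg)
  have G: "G = cmod (a + b) powr \<alpha>"
    unfolding G_def sum ..
  have "cmod (a + b) powr \<alpha> \<le> (cmod a + cmod b) powr \<alpha>"
    using a by (intro powr_mono2 norm_triangle_ineq) auto
  also have "\<dots> \<le> 2 powr \<alpha> * (cmod a powr \<alpha> + cmod b powr \<alpha>)"
    using a by (intro powr_add_le) auto
  finally show "G \<le> 2 powr \<alpha> * (A + B)" unfolding G A B .
  have "cmod a powr \<alpha> \<le> (cmod (a + b) + cmod b) powr \<alpha>"
    using a norm_triangle_ineq4[of "a + b" b] by (intro powr_mono2) auto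
  also have "\<dots> \<le> 2 powr \<alpha> * (cmod (a + b) powr \<alpha> + cmod b powr \<alpha>)"
    using a by (intro powr_add_le) auto
  finally show "A \<le> 2 powr \<alpha> * (G + B)" unfolding G A B .
qed

lemma main_part_le_pole_weight:
  assumes "\<alpha> > 0" "\<bar>h\<bar> \<le> L"
  shows "main_part \<alpha> p h x \<le> (L powr \<alpha> + 2 powr \<alpha>) * pole_weight \<alpha> p x"
  unfolding main_part_def using assms by (rule chord_powr_le_pole_weight)

lemma main_part_integrable:
  assumes "\<alpha> > 0" "0 < p" "p < \<alpha>"
  shows "integrable lborel (main_part \<alpha> p h)"
proof (rule integrable_bounded_by_multiple(1))
  show "integrable lborel (pole_weight \<alpha> p)"
    using assms by (intro pole_weight_integrable) auto
  show "main_part \<alpha> p h x \<le> (\<bar>h\<bar> powr \<alpha> + 2 powr \<alpha>) * pole_weight \<alpha> p x" for x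
    using assms(1) by (rule main_part_le_pole_weight) simp
qed (simp_all add: main_part_def)

text \<open>The substitution x = y / h shows that the main part is homogeneous of degree p in h.\<close>

lemma main_part_scaling:
  assumes h: "h \<noteq> 0"
  shows "integral\<^sup>L lborel (main_part \<alpha> p h) = \<bar>h\<bar> powr p * integral\<^sup>L lborel (main_part \<alpha> p 1)"
proof -
  have scaled: "main_part \<alpha> p h (0 + (1/h) * x) = \<bar>h\<bar> powr (1 + p) * main_part \<alpha> p 1 x" for x
  proof -
    have "\<bar>x / h\<bar> powr (-1 - p) = \<bar>x\<bar> powr (-1 - p) / \<bar>h\<bar> powr (-1 - p)"
      by (simp add: abs_divide powr_divide)
    also have "\<bar>h\<bar> powr (-1 - p) = inverse (\<bar>h\<bar> powr (1 + p))"
      using powr_minus[of "\<bar>h\<bar>" "1 + p"] by simp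
    finally have "\<bar>x / h\<bar> powr (-1 - p) = \<bar>x\<bar> powr (-1 - p) * \<bar>h\<bar> powr (1 + p)"
      by (simp add: divide_inverse)
    then show ?thesis using h by (simp add: main_part_def)
  qed
  have "integral\<^sup>L lborel (main_part \<alpha> p h)
      = \<bar>1/h\<bar> *\<^sub>R integral\<^sup>L lborel (\<lambda>x. main_part \<alpha> p h (0 + (1/h) * x))"
    using h by (intro lborel_integral_real_affine) simp
  also have "\<dots> = \<bar>1/h\<bar> * \<bar>h\<bar> powr (1 + p) * integral\<^sup>L lborel (main_part \<alpha> p 1)"
    unfolding scaled by simp
  also have "\<bar>1/h\<bar> * \<bar>h\<bar> powr (1 + p) = \<bar>h\<bar> powr p"
    using h by (simp add: powr_add field_simps)
  finally show ?thesis .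
qed

text \<open>The normalised main part is bounded below by its integral over [pi/2, pi].\<close>

lemma main_part_unit_lower:
  assumes a: "\<alpha> > 0" and p: "0 < p" "p < \<alpha>"
  shows "pi powr (-1 - \<alpha>) * (pi / 2) \<le> integral\<^sup>L lborel (main_part \<alpha> p 1)"
proof -
  have lower: "indicator {pi/2..pi} x * pi powr (-1 - \<alpha>) \<le> main_part \<alpha> p 1 x" for x
  proof (cases "x \<in> {pi/2..pi}")
    case True
    then have x: "pi/2 \<le> x" "x \<le> pi" by auto
    have "cos x \<le> 0" using x cos_ge_zero[of "pi - x"] by simp
    then have "1 \<le> chord x powr \<alpha>"
      using a chord_ge_1 by (intro ge_one_powr_ge_zero) auto
    moreover have "pi powr (-1 - \<alpha>) \<le> \<bar>x\<bar> powr (-1 - p)"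
    proof -
      have "pi powr (-1 - \<alpha>) \<le> pi powr (-1 - p)"
        using p pi_gt3 by (intro powr_mono) auto
      also have "\<dots> \<le> \<bar>x\<bar> powr (-1 - p)"
        using p x pi_gt_zero by (intro powr_mono2') linarith+
      finally show ?thesis .
    qed
    ultimately show ?thesis
      using True mult_mono[of 1 "chord x powr \<alpha>"] by (simp add: main_part_def)
  qed (simp add: main_part_def)
  have "pi powr (-1 - \<alpha>) * (pi / 2) = integral\<^sup>L lborel (\<lambda>x. indicator {pi/2..pi} x * pi powr (-1 - \<alpha>))"
    by simp
  also have "\<dots> \<le> integral\<^sup>L lborel (main_part \<alpha> p 1)"
    using main_part_integrable[OF a p] lower by (intro integral_mono) auto
  finally show ?thesis .
qed

lemma correction_le_pole_weights:
  fixes \<alpha> e u v s T x qlo qhi :: real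
  assumes a: "\<alpha> > 0" and e: "e > 0" and uv: "\<bar>u - v\<bar> \<le> e" and s: "\<bar>s\<bar> \<le> T"
    and ql: "qlo \<le> \<alpha> * v - 2 * \<alpha> * e" and qh: "\<alpha> * v + 2 * \<alpha> * e \<le> qhi"
  shows "correction \<alpha> s u v x \<le> 2 * (2 / e) powr \<alpha> * (T powr \<alpha> + 2 powr \<alpha>) * \<bar>u - v\<bar> powr \<alpha>
           * (pole_weight \<alpha> qlo x + pole_weight \<alpha> qhi x)"
proof (cases "x = 0")
  case True
  then show ?thesis
    using a by (simp add: correction_def chord_def pole_weight_nonneg add_nonneg_nonneg)
next
  case False
  define y where "y = \<bar>x\<bar>"
  define b where "b = 1/\<alpha> + v"
  define F where "F = pole_weight \<alpha> qlo x + pole_weight \<alpha> qhi x"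
  define M where "M = T powr \<alpha> + 2 powr \<alpha>"
  have y: "y > 0" using False by (simp add: y_def)
  have ae: "\<alpha> * e > 0" using a e by simp
  have power_exponent: "(y powr (-b + c)) powr \<alpha> = y powr (-1 - (\<alpha> * v - \<alpha> * c))" for c
  proof -
    have "(-b + c) * \<alpha> = -1 - (\<alpha> * v - \<alpha> * c)" using a by (simp add: b_def field_simps)
    then show ?thesis by (simp add: powr_powr)
  qed
  have weight: "chord (s * x) powr \<alpha> * y powr (-1 - q) \<le> M * F" if "qlo \<le> q" "q \<le> qhi" for q
  proof -
    have "chord (s * x) powr \<alpha> * y powr (-1 - q) \<le> M * pole_weight \<alpha> q x"
      unfolding y_def M_def using a s by (rule chord_powr_le_pole_weight)
    also have "\<dots> \<le> M * F"
      unfolding F_def M_def by (intro mult_left_mono pole_weight_between that) auto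
    finally show ?thesis .
  qed
  have "\<bar>y powr (-(1/\<alpha> + u)) - y powr (-b)\<bar> \<le> \<bar>u - v\<bar> / e * (y powr (-b + 2*e) + y powr (-b - 2*e))"
    using powr_exponent_diff_le[OF y e, of "1/\<alpha> + u" b] uv by (simp add: b_def)
  then have "\<bar>y powr (-(1/\<alpha> + u)) - y powr (-b)\<bar> powr \<alpha>
      \<le> (\<bar>u - v\<bar> / e) powr \<alpha> * (y powr (-b + 2*e) + y powr (-b - 2*e)) powr \<alpha>"
    using a e by (simp add: powr_mono2 flip: powr_mult)
  also have "\<dots> \<le> (\<bar>u - v\<bar> / e) powr \<alpha> * (2 powr \<alpha> * (y powr (-1 - (\<alpha> * v - 2 * \<alpha> * e))
      + y powr (-1 - (\<alpha> * v + 2 * \<alpha> * e))))"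
    using a powr_add_le[of "y powr (-b + 2*e)" "y powr (-b - 2*e)" \<alpha>]
      power_exponent[of "2*e"] power_exponent[of "-(2*e)"]
    by (intro mult_left_mono) (simp_all add: algebra_simps)
  finally have difference: "\<bar>y powr (-(1/\<alpha> + u)) - y powr (-b)\<bar> powr \<alpha>
      \<le> (2 / e) powr \<alpha> * \<bar>u - v\<bar> powr \<alpha> * (y powr (-1 - (\<alpha> * v - 2 * \<alpha> * e))
      + y powr (-1 - (\<alpha> * v + 2 * \<alpha> * e)))"
    using e by (simp add: powr_divide powr_mult mult_ac)
  have "correction \<alpha> s u v x \<le> (2 / e) powr \<alpha> * \<bar>u - v\<bar> powr \<alpha>
      * (chord (s * x) powr \<alpha> * y powr (-1 - (\<alpha> * v - 2 * \<alpha> * e))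
      + chord (s * x) powr \<alpha> * y powr (-1 - (\<alpha> * v + 2 * \<alpha> * e)))"
    using mult_left_mono[OF difference, of "chord (s * x) powr \<alpha>"]
    by (simp add: correction_def y_def b_def algebra_simps)
  also have "\<dots> \<le> (2 / e) powr \<alpha> * \<bar>u - v\<bar> powr \<alpha> * (M * F + M * F)"
    using ql qh ae by (intro mult_left_mono add_mono weight) auto
  finally show ?thesis by (simp add: F_def M_def algebra_simps)
qed

lemma main_part_unit_upper:
  assumes a: "\<alpha> > 0" and q: "0 < qlo" "qlo \<le> p" "p \<le> qhi" "qhi < \<alpha>"
  shows "integral\<^sup>L lborel (main_part \<alpha> p 1)
           \<le> (1 + 2 powr \<alpha>) * integral\<^sup>L lborel (\<lambda>x. pole_weight \<alpha> qlo x + pole_weight \<alpha> qhi x)"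
proof -
  have p: "0 < p" "p < \<alpha>" using q by linarith+
  have "integral\<^sup>L lborel (main_part \<alpha> p 1) \<le> (1 + 2 powr \<alpha>) * integral\<^sup>L lborel (pole_weight \<alpha> p)"
  proof (rule integrable_bounded_by_multiple(2))
    show "main_part \<alpha> p 1 x \<le> (1 + 2 powr \<alpha>) * pole_weight \<alpha> p x" for x
      using main_part_le_pole_weight[OF a, of 1 1 p x] by simp
  qed (simp_all add: pole_weight_integrable[OF p] main_part_def)
  also have "integral\<^sup>L lborel (pole_weight \<alpha> p)
      \<le> integral\<^sup>L lborel (\<lambda>x. pole_weight \<alpha> qlo x + pole_weight \<alpha> qhi x)"
    using pole_weight_integrable[OF p] q
    by (intro integral_mono pole_weight_between Bochner_Integration.integrable_add
        pole_weight_integrable) auto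
  finally show ?thesis by (simp add: mult_left_mono)
qed

lemma correction_integral_le:
  fixes \<alpha> e u v s T qlo qhi :: real
  assumes a: "\<alpha> > 0" and e: "e > 0" and uv: "\<bar>u - v\<bar> \<le> e" and s: "\<bar>s\<bar> \<le> T"
    and ql: "qlo \<le> \<alpha> * v - 2 * \<alpha> * e" and qh: "\<alpha> * v + 2 * \<alpha> * e \<le> qhi"
    and q: "0 < qlo" "qhi < \<alpha>"
  defines "KB \<equiv> 2 * (2 / e) powr \<alpha> * (T powr \<alpha> + 2 powr \<alpha>)"
    and "F \<equiv> \<lambda>x. pole_weight \<alpha> qlo x + pole_weight \<alpha> qhi x"
  shows "integrable lborel (correction \<alpha> s u v)"
    and "integral\<^sup>L lborel (correction \<alpha> s u v) \<le> KB * \<bar>u - v\<bar> powr \<alpha> * integral\<^sup>L lborel F"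
proof -
  have "qlo < qhi" using ql qh a e by (smt (verit) mult_pos_pos)
  then have F: "integrable lborel F"
    unfolding F_def using q by (intro Bochner_Integration.integrable_add pole_weight_integrable) auto
  have bound: "correction \<alpha> s u v x \<le> (KB * \<bar>u - v\<bar> powr \<alpha>) * F x" for x
    using correction_le_pole_weights[OF a e uv s ql qh] by (simp add: KB_def F_def mult_ac)
  have "0 \<le> correction \<alpha> s u v x" for x by (simp add: correction_def)
  from integrable_bounded_by_multiple[OF F _ this bound]
  show "integrable lborel (correction \<alpha> s u v)"
    and "integral\<^sup>L lborel (correction \<alpha> s u v) \<le> KB * \<bar>u - v\<bar> powr \<alpha> * integral\<^sup>L lborel F"
    by simp_all
qed

definition incr_moment :: "real \<Rightarrow> (real \<Rightarrow> real) \<Rightarrow> real \<Rightarrow> real \<Rightarrow> real" where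
  "incr_moment \<alpha> H t s =
     integral\<^sup>L lborel (\<lambda>x. cmod (rhmsp_kernel \<alpha> H t x - rhmsp_kernel \<alpha> H s x) powr \<alpha>)"

lemma rhmsp_incr_norm_eq: "rhmsp_incr_norm \<alpha> H t s = incr_moment \<alpha> H t s powr (1 / \<alpha>)"
  unfolding rhmsp_incr_norm_def incr_moment_def ..

lemma incr_moment_nonneg: "0 \<le> incr_moment \<alpha> H t s"
  unfolding incr_moment_def by (intro integral_nonneg_AE AE_I2) simp

lemma incr_moment_split:
  fixes \<alpha> t s :: real and H :: "real \<Rightarrow> real"
  assumes a: "\<alpha> > 0"
  defines "A \<equiv> main_part \<alpha> (\<alpha> * H t) (t - s)" and "B \<equiv> correction \<alpha> s (H t) (H s)"
  assumes A: "integrable lborel A" and B: "integrable lborel B"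
  shows "incr_moment \<alpha> H t s \<le> 2 powr \<alpha> * (integral\<^sup>L lborel A + integral\<^sup>L lborel B)"
    and "integral\<^sup>L lborel A \<le> 2 powr \<alpha> * (incr_moment \<alpha> H t s + integral\<^sup>L lborel B)"
proof -
  define G where "G = (\<lambda>x. cmod (rhmsp_kernel \<alpha> H t x - rhmsp_kernel \<alpha> H s x) powr \<alpha>)"
  have split: "G x \<le> 2 powr \<alpha> * (A x + B x)" "A x \<le> 2 powr \<alpha> * (G x + B x)" for x
    using kernel_increment_split[OF a, where H = H and t = t and s = s and x = x]
    by (simp_all add: G_def A_def B_def)
  have G_measurable: "G \<in> borel_measurable lborel" unfolding G_def rhmsp_kernel_def by measurable
  have G_nonneg: "0 \<le> G x" for x by (simp add: G_def)
  have AB: "integrable lborel (\<lambda>x. A x + B x)" using A B by simp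
  have moment: "incr_moment \<alpha> H t s = integral\<^sup>L lborel G"
    unfolding incr_moment_def G_def ..
  note G = integrable_bounded_by_multiple[OF AB G_measurable G_nonneg split(1)]
  show "incr_moment \<alpha> H t s \<le> 2 powr \<alpha> * (integral\<^sup>L lborel A + integral\<^sup>L lborel B)"
    using G(2) A B unfolding moment by simp
  have "integral\<^sup>L lborel A \<le> integral\<^sup>L lborel (\<lambda>x. 2 powr \<alpha> * (G x + B x))"
    using split(2) A G(1) B by (intro integral_mono) simp_all
  also have "\<dots> = 2 powr \<alpha> * (incr_moment \<alpha> H t s + integral\<^sup>L lborel B)"
    using G(1) B unfolding moment by simp
  finally show "integral\<^sup>L lborel A \<le> 2 powr \<alpha> * (incr_moment \<alpha> H t s + integral\<^sup>L lborel B)" .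
qed

lemma incr_moment_estimates:
  fixes \<alpha> e qlo qhi T t s :: real and H :: "real \<Rightarrow> real"
  assumes a: "\<alpha> > 0" and e: "e > 0" and q: "0 < qlo" "qhi < \<alpha>"
    and ts: "t \<noteq> s" "\<bar>s\<bar> \<le> T" and dH: "\<bar>H t - H s\<bar> \<le> e"
    and qs: "qlo \<le> \<alpha> * H s - 2 * \<alpha> * e" "\<alpha> * H s + 2 * \<alpha> * e \<le> qhi"
    and qt: "qlo \<le> \<alpha> * H t" "\<alpha> * H t \<le> qhi"
  defines "IF \<equiv> integral\<^sup>L lborel (\<lambda>x. pole_weight \<alpha> qlo x + pole_weight \<alpha> qhi x)"
    and "KB \<equiv> 2 * (2 / e) powr \<alpha> * (T powr \<alpha> + 2 powr \<alpha>)"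
  shows "incr_moment \<alpha> H t s \<le> 2 powr \<alpha> * ((1 + 2 powr \<alpha>) * IF * \<bar>t - s\<bar> powr (\<alpha> * H t)
           + KB * IF * \<bar>H t - H s\<bar> powr \<alpha>)"
    and "2 powr (-\<alpha>) * (pi powr (-1 - \<alpha>) * (pi / 2)) * \<bar>t - s\<bar> powr (\<alpha> * H t)
           - KB * IF * \<bar>H t - H s\<bar> powr \<alpha> \<le> incr_moment \<alpha> H t s"
proof -
  define p where "p = \<alpha> * H t"
  define A where "A = main_part \<alpha> p (t - s)"
  define B where "B = correction \<alpha> s (H t) (H s)"
  have p: "0 < p" "p < \<alpha>" using q qt unfolding p_def by linarith+
  have h_nonneg: "0 \<le> \<bar>t - s\<bar> powr p" by simp
  have A: "integrable lborel A" unfolding A_def using a p by (rule main_part_integrable)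
  have A_integral: "integral\<^sup>L lborel A = \<bar>t - s\<bar> powr p * integral\<^sup>L lborel (main_part \<alpha> p 1)"
    unfolding A_def using ts by (intro main_part_scaling) simp
  have A_upper: "integral\<^sup>L lborel A \<le> (1 + 2 powr \<alpha>) * IF * \<bar>t - s\<bar> powr p"
    using mult_left_mono[OF main_part_unit_upper[OF a q(1) qt[folded p_def] q(2)] h_nonneg]
    unfolding A_integral IF_def by (simp add: mult_ac)
  have "pi powr (-1 - \<alpha>) * (pi / 2) * \<bar>t - s\<bar> powr p \<le> integral\<^sup>L lborel A"
    unfolding A_integral using mult_right_mono[OF main_part_unit_lower[OF a p] h_nonneg]
    by (simp add: mult.commute)
  then have A_lower: "2 powr (-\<alpha>) * (pi powr (-1 - \<alpha>) * (pi / 2)) * \<bar>t - s\<bar> powr p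
      \<le> 2 powr (-\<alpha>) * integral\<^sup>L lborel A"
    unfolding mult.assoc by (rule mult_left_mono) simp
  note B = correction_integral_le[OF a e dH ts(2) qs q, folded KB_def IF_def B_def]
  note split = incr_moment_split[OF a A[unfolded A_def p_def] B(1)[unfolded B_def],
      folded p_def, folded A_def B_def]
  have "incr_moment \<alpha> H t s \<le> 2 powr \<alpha> * (integral\<^sup>L lborel A + integral\<^sup>L lborel B)"
    by (rule split(1))
  also have "\<dots> \<le> 2 powr \<alpha> * ((1 + 2 powr \<alpha>) * IF * \<bar>t - s\<bar> powr p + KB * IF * \<bar>H t - H s\<bar> powr \<alpha>)"
    using A_upper B(2) by (intro mult_left_mono add_mono) (simp_all add: mult_ac)
  finally show "incr_moment \<alpha> H t s \<le> 2 powr \<alpha> * ((1 + 2 powr \<alpha>) * IF * \<bar>t - s\<bar> powr (\<alpha> * H t)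
           + KB * IF * \<bar>H t - H s\<bar> powr \<alpha>)"
    unfolding p_def .
  have "2 powr (-\<alpha>) * integral\<^sup>L lborel A \<le> incr_moment \<alpha> H t s + integral\<^sup>L lborel B"
    using split(2) by (simp add: powr_minus field_simps)
  moreover have "integral\<^sup>L lborel B \<le> KB * IF * \<bar>H t - H s\<bar> powr \<alpha>"
    using B(2) by (simp add: mult_ac)
  ultimately show "2 powr (-\<alpha>) * (pi powr (-1 - \<alpha>) * (pi / 2)) * \<bar>t - s\<bar> powr (\<alpha> * H t)
           - KB * IF * \<bar>H t - H s\<bar> powr \<alpha> \<le> incr_moment \<alpha> H t s"
    using A_lower unfolding p_def by linarith
qed

lemma increment_moment_bounds:
  fixes \<alpha> Hl Hu T :: real
  assumes a: "\<alpha> > 0" and Hl: "0 < Hl" and Hu: "Hu < 1"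
  obtains e K c where "e > 0" "K \<ge> 0" "c > 0"
    and "\<And>H t s. t \<in> {0..T} \<Longrightarrow> s \<in> {0..T} \<Longrightarrow> t \<noteq> s \<Longrightarrow> H t \<in> {Hl..Hu} \<Longrightarrow> H s \<in> {Hl..Hu}
           \<Longrightarrow> \<bar>H t - H s\<bar> \<le> e
           \<Longrightarrow> incr_moment \<alpha> H t s \<le> K * (\<bar>t - s\<bar> powr (\<alpha> * H t) + \<bar>H t - H s\<bar> powr \<alpha>)
             \<and> c * \<bar>t - s\<bar> powr (\<alpha> * H t) - K * \<bar>H t - H s\<bar> powr \<alpha> \<le> incr_moment \<alpha> H t s"
proof -
  define e where "e = min Hl (1 - Hu) / 4"
  define qlo where "qlo = \<alpha> * (Hl - 2 * e)"
  define qhi where "qhi = \<alpha> * (Hu + 2 * e)"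
  define IF where "IF = integral\<^sup>L lborel (\<lambda>x. pole_weight \<alpha> qlo x + pole_weight \<alpha> qhi x)"
  define KB where "KB = 2 * (2 / e) powr \<alpha> * (T powr \<alpha> + 2 powr \<alpha>)"
  define K where "K = 2 powr \<alpha> * ((1 + 2 powr \<alpha>) + KB) * IF"
  define c where "c = 2 powr (-\<alpha>) * (pi powr (-1 - \<alpha>) * (pi / 2))"
  have e: "e > 0" "4 * e \<le> Hl" "4 * e \<le> 1 - Hu" using Hl Hu by (simp_all add: e_def)
  have q: "0 < qlo" "qhi < \<alpha>"
    using a e by (simp_all add: qlo_def qhi_def)
  have IF: "0 \<le> IF"
    unfolding IF_def by (intro integral_nonneg_AE AE_I2) (simp add: pole_weight_nonneg add_nonneg_nonneg)
  have KB: "0 \<le> KB" by (simp add: KB_def)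
  have K: "0 \<le> K" using IF KB by (simp add: K_def)
  have KB_le_K: "KB * IF \<le> K"
  proof -
    have "KB * IF \<le> 2 powr \<alpha> * (KB * IF)"
      using mult_right_mono[of 1 "2 powr \<alpha>" "KB * IF"] ge_one_powr_ge_zero[of 2 \<alpha>] a IF KB by simp
    also have "\<dots> \<le> K" using IF by (simp add: K_def algebra_simps)
    finally show ?thesis .
  qed
  show ?thesis
  proof (rule that[OF e(1) K])
    show "c > 0" by (simp add: c_def)
    fix H t s
    assume t: "t \<in> {0..T}" and s: "s \<in> {0..T}" and ts: "t \<noteq> s"
      and Ht: "H t \<in> {Hl..Hu}" and Hs: "H s \<in> {Hl..Hu}" and dH: "\<bar>H t - H s\<bar> \<le> e"
    have "\<bar>s\<bar> \<le> T" using s by auto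
    have qs: "qlo \<le> \<alpha> * H s - 2 * \<alpha> * e" "\<alpha> * H s + 2 * \<alpha> * e \<le> qhi"
      using Hs a by (simp_all add: qlo_def qhi_def algebra_simps)
    have qt: "qlo \<le> \<alpha> * H t" "\<alpha> * H t \<le> qhi"
      using Ht a e by (simp_all add: qlo_def qhi_def)
    note estimates = incr_moment_estimates[OF a e(1) q ts \<open>\<bar>s\<bar> \<le> T\<close> dH qs qt,
        folded IF_def KB_def, folded c_def]
    define h where "h = \<bar>t - s\<bar> powr (\<alpha> * H t)"
    define d where "d = \<bar>H t - H s\<bar> powr \<alpha>"
    have "h \<ge> 0" "d \<ge> 0" by (simp_all add: h_def d_def)
    have "2 powr \<alpha> * ((1 + 2 powr \<alpha>) * IF * h + KB * IF * d) \<le> K * (h + d)"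
      using \<open>h \<ge> 0\<close> \<open>d \<ge> 0\<close> IF KB by (simp add: K_def algebra_simps)
    moreover have "c * h - K * d \<le> c * h - KB * IF * d"
      using KB_le_K \<open>d \<ge> 0\<close> by (simp add: mult_right_mono)
    ultimately show "incr_moment \<alpha> H t s \<le> K * (\<bar>t - s\<bar> powr (\<alpha> * H t) + \<bar>H t - H s\<bar> powr \<alpha>)
             \<and> c * \<bar>t - s\<bar> powr (\<alpha> * H t) - K * \<bar>H t - H s\<bar> powr \<alpha> \<le> incr_moment \<alpha> H t s"
      using estimates unfolding h_def d_def by linarith
  qed
qed

lemma H_window_bounds:
  fixes H :: "real \<Rightarrow> real" and C \<gamma> t s :: real
  assumes hol: "\<forall>t\<ge>0. \<forall>s\<ge>0. \<bar>H t - H s\<bar> \<le> C * \<bar>t - s\<bar> powr \<gamma>"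
    and C: "C \<ge> 0" and \<gamma>: "\<gamma> > 0" and t: "t \<ge> 0" and s: "s \<ge> 0"
  shows "H_max H t s \<le> H t + C * \<bar>t - s\<bar> powr \<gamma>"
    and "H t - C * \<bar>t - s\<bar> powr \<gamma> \<le> H_min H t s"
proof -
  have close: "\<bar>H u - H t\<bar> \<le> C * \<bar>t - s\<bar> powr \<gamma>" if "u \<in> {min s t..max s t}" for u
  proof -
    have "\<bar>u - t\<bar> powr \<gamma> \<le> \<bar>t - s\<bar> powr \<gamma>"
      using that \<gamma> by (intro powr_mono2) auto
    moreover have "\<bar>H u - H t\<bar> \<le> C * \<bar>u - t\<bar> powr \<gamma>"
      using hol that t s by auto
    ultimately show ?thesis using C by (meson mult_left_mono order_trans)
  qed
  have nonempty: "{min s t..max s t} \<noteq> {}" by simp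
  show "H_max H t s \<le> H t + C * \<bar>t - s\<bar> powr \<gamma>"
    unfolding H_max_def using close by (intro cSUP_least[OF nonempty]) fastforce
  show "H t - C * \<bar>t - s\<bar> powr \<gamma> \<le> H_min H t s"
    unfolding H_min_def using close by (intro cINF_greatest[OF nonempty]) fastforce
qed

text \<open>For 0 < h <= 1 an exponent perturbation of size c h^g changes h^p by at most the
  factor exp(c / g), because h^{-c h^g} is bounded.\<close>

lemma powr_exponent_shift:
  fixes h p q c g :: real
  assumes h: "0 < h" "h \<le> 1" and c: "c \<ge> 0" and g: "g > 0" and pq: "q \<le> p + c * h powr g"
  shows "h powr p \<le> exp (c / g) * h powr q"
proof -
  have "-g * ln h \<le> h powr (-g)"
    using ln_bound[of "h powr (-g)"] h by (simp add: ln_powr)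
  then have "h powr g * (-g * ln h) \<le> h powr g * h powr (-g)"
    by (rule mult_left_mono) simp
  then have log_bound: "- (h powr g * ln h) \<le> 1 / g"
    using h g by (simp add: powr_minus field_simps)
  have "(p - q) * ln h \<le> (- (c * h powr g)) * ln h"
    using pq h by (intro mult_right_mono_neg) auto
  also have "\<dots> = c * (- (h powr g * ln h))" by simp
  also have "\<dots> \<le> c / g" using mult_left_mono[OF log_bound c] by simp
  finally have "h powr (p - q) \<le> exp (c / g)"
    using h by (simp add: powr_def)
  then have "h powr (p - q) * h powr q \<le> exp (c / g) * h powr q"
    by (rule mult_right_mono) simp
  then show ?thesis by (simp flip: powr_add)
qed

lemma powr_eventually_small:
  fixes p \<epsilon> :: real
  assumes "p > 0" "\<epsilon> > 0"
  obtains \<delta> where "\<delta> > 0" "\<And>h. 0 < h \<Longrightarrow> h < \<delta> \<Longrightarrow> h powr p < \<epsilon>"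
proof
  show "\<epsilon> powr (1 / p) > 0" using assms by simp
  fix h assume "0 < h" "h < \<epsilon> powr (1 / p)"
  then have "h powr p < (\<epsilon> powr (1 / p)) powr p"
    using assms by (intro powr_less_mono2) auto
  also have "\<dots> = \<epsilon>" using assms by (simp add: powr_powr)
  finally show "h powr p < \<epsilon>" .
qed

lemma Hoelder_increment_powr:
  fixes H :: "real \<Rightarrow> real" and C \<gamma> \<alpha> t s :: real
  assumes "\<bar>H t - H s\<bar> \<le> C * \<bar>t - s\<bar> powr \<gamma>" and "C \<ge> 0" and "\<alpha> > 0"
  shows "\<bar>H t - H s\<bar> powr \<alpha> \<le> C powr \<alpha> * \<bar>t - s\<bar> powr (\<alpha> * \<gamma>)"
proof -
  have "\<bar>H t - H s\<bar> powr \<alpha> \<le> (C * \<bar>t - s\<bar> powr \<gamma>) powr \<alpha>"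
    using assms by (intro powr_mono2) auto
  also have "\<dots> = C powr \<alpha> * \<bar>t - s\<bar> powr (\<alpha> * \<gamma>)"
    using assms by (simp add: powr_mult powr_powr mult.commute)
  finally show ?thesis .
qed

text \<open>Since gamma exceeds every value of H, the term h^{alpha gamma} is dominated by
  h^{alpha H(t)}, and by an arbitrarily small multiple of it once h is small.\<close>

lemma Hoelder_term_absorbed:
  fixes h p \<gamma> Hu \<alpha> \<epsilon> :: real
  assumes h: "0 < h" "h \<le> 1" and a: "\<alpha> > 0" and p: "p \<le> Hu" and \<gamma>: "Hu < \<gamma>"
    and small: "h powr (\<alpha> * (\<gamma> - Hu)) \<le> \<epsilon>"
  shows "h powr (\<alpha> * \<gamma>) \<le> h powr (\<alpha> * p)" and "h powr (\<alpha> * \<gamma>) \<le> \<epsilon> * h powr (\<alpha> * p)"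
proof -
  have split: "h powr (\<alpha> * \<gamma>) = h powr (\<alpha> * (\<gamma> - p)) * h powr (\<alpha> * p)"
    by (simp add: algebra_simps flip: powr_add)
  have "h powr (\<alpha> * (\<gamma> - p)) \<le> 1"
    using h a p \<gamma> by (intro powr_le1) auto
  then show "h powr (\<alpha> * \<gamma>) \<le> h powr (\<alpha> * p)"
    unfolding split by (intro mult_left_le_one_le) auto
  have "h powr (\<alpha> * (\<gamma> - p)) \<le> h powr (\<alpha> * (\<gamma> - Hu))"
    using h a p by (intro powr_mono') auto
  then show "h powr (\<alpha> * \<gamma>) \<le> \<epsilon> * h powr (\<alpha> * p)"
    unfolding split using small by (intro mult_right_mono) auto
qed

lemma incr_moment_comparable:
  fixes \<alpha> C \<gamma> Hl Hu T :: real and H :: "real \<Rightarrow> real"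
  assumes a: "\<alpha> > 0" and Hl: "0 < Hl" and Hu: "Hu < 1"
    and range: "\<forall>t\<ge>0. H t \<in> {Hl..Hu}" and C: "C \<ge> 0" and \<gamma>: "Hu < \<gamma>"
    and hol: "\<forall>t\<ge>0. \<forall>s\<ge>0. \<bar>H t - H s\<bar> \<le> C * \<bar>t - s\<bar> powr \<gamma>"
  obtains \<delta> c K where "\<delta> > 0" "c > 0" "K \<ge> 0"
    and "\<And>t s. t \<in> {0..T} \<Longrightarrow> s \<in> {0..T} \<Longrightarrow> 0 < \<bar>t - s\<bar> \<Longrightarrow> \<bar>t - s\<bar> < \<delta> \<Longrightarrow>
           c * \<bar>t - s\<bar> powr (\<alpha> * H t) \<le> incr_moment \<alpha> H t s
           \<and> incr_moment \<alpha> H t s \<le> K * \<bar>t - s\<bar> powr (\<alpha> * H t)"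
proof -
  obtain e K0 c0 where e: "e > 0" and K0: "K0 \<ge> 0" and c0: "c0 > 0" and bounds:
    "\<And>H t s. t \<in> {0..T} \<Longrightarrow> s \<in> {0..T} \<Longrightarrow> t \<noteq> s \<Longrightarrow> H t \<in> {Hl..Hu} \<Longrightarrow> H s \<in> {Hl..Hu}
      \<Longrightarrow> \<bar>H t - H s\<bar> \<le> e
      \<Longrightarrow> incr_moment \<alpha> H t s \<le> K0 * (\<bar>t - s\<bar> powr (\<alpha> * H t) + \<bar>H t - H s\<bar> powr \<alpha>)
        \<and> c0 * \<bar>t - s\<bar> powr (\<alpha> * H t) - K0 * \<bar>H t - H s\<bar> powr \<alpha> \<le> incr_moment \<alpha> H t s"
    using increment_moment_bounds[OF a Hl Hu] by blast
  have \<gamma>0: "\<gamma> > 0" using range Hl \<gamma> by force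
  define D where "D = K0 * C powr \<alpha>"
  have D: "D \<ge> 0" using K0 by (simp add: D_def)
  \<comment> \<open>for small increments the Hoelder term stays below the tolerance e ...\<close>
  obtain \<delta>1 where \<delta>1: "\<delta>1 > 0" "\<And>h. 0 < h \<Longrightarrow> h < \<delta>1 \<Longrightarrow> h powr \<gamma> < e / (C + 1)"
    using powr_eventually_small[OF \<gamma>0, of "e / (C + 1)"] e C by auto
  \<comment> \<open>... and becomes negligible against the main part\<close>
  obtain \<delta>2 where \<delta>2: "\<delta>2 > 0"
    "\<And>h. 0 < h \<Longrightarrow> h < \<delta>2 \<Longrightarrow> h powr (\<alpha> * (\<gamma> - Hu)) < c0 / (2 * (D + 1))"
    using powr_eventually_small[of "\<alpha> * (\<gamma> - Hu)" "c0 / (2 * (D + 1))"] a \<gamma> c0 D by auto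
  show ?thesis
  proof (rule that[of "min 1 (min \<delta>1 \<delta>2)" "c0 / 2" "K0 * (1 + C powr \<alpha>)"])
    fix t s assume t: "t \<in> {0..T}" and s: "s \<in> {0..T}" and h0: "0 < \<bar>t - s\<bar>"
      and small: "\<bar>t - s\<bar> < min 1 (min \<delta>1 \<delta>2)"
    define h where "h = \<bar>t - s\<bar>"
    have h: "0 < h" "h \<le> 1" using h0 small by (simp_all add: h_def)
    have Ht: "H t \<in> {Hl..Hu}" and Hs: "H s \<in> {Hl..Hu}" using range t s by auto
    have dH: "\<bar>H t - H s\<bar> \<le> C * h powr \<gamma>" using hol t s by (simp add: h_def)
    have "C * h powr \<gamma> \<le> (C + 1) * h powr \<gamma>" by (simp add: mult_right_mono)
    also have "\<dots> < e" using \<delta>1(2)[OF h(1)] small C by (simp add: h_def field_simps)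
    finally have "\<bar>H t - H s\<bar> \<le> e" using dH by linarith
    then have m: "incr_moment \<alpha> H t s \<le> K0 * h powr (\<alpha> * H t) + K0 * \<bar>H t - H s\<bar> powr \<alpha>"
      "c0 * h powr (\<alpha> * H t) - K0 * \<bar>H t - H s\<bar> powr \<alpha> \<le> incr_moment \<alpha> H t s"
      using bounds[OF t s _ Ht Hs] h0 by (auto simp: h_def algebra_simps)
    have dpow: "K0 * \<bar>H t - H s\<bar> powr \<alpha> \<le> D * h powr (\<alpha> * \<gamma>)"
      using mult_left_mono[OF Hoelder_increment_powr[OF dH[unfolded h_def] C a] K0]
      by (simp add: D_def h_def mult.assoc)
    have "h powr (\<alpha> * (\<gamma> - Hu)) \<le> c0 / (2 * (D + 1))"
      using \<delta>2(2)[OF h(1)] small by (simp add: h_def)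
    note absorbed = Hoelder_term_absorbed[OF h a _ \<gamma> this, of "H t"]
    have "D * h powr (\<alpha> * \<gamma>) \<le> D * h powr (\<alpha> * H t)"
      using absorbed(1) Ht D by (intro mult_left_mono) auto
    then have "incr_moment \<alpha> H t s \<le> K0 * (1 + C powr \<alpha>) * \<bar>t - s\<bar> powr (\<alpha> * H t)"
      using m(1) dpow by (simp add: D_def h_def algebra_simps)
    moreover have "D * h powr (\<alpha> * \<gamma>) \<le> c0 / 2 * h powr (\<alpha> * H t)"
    proof -
      have ratio: "D * (c0 / (2 * (D + 1))) \<le> c0 / 2"
        using D c0 by (simp add: field_simps)
      have "D * h powr (\<alpha> * \<gamma>) \<le> D * (c0 / (2 * (D + 1))) * h powr (\<alpha> * H t)"
        using mult_left_mono[OF absorbed(2) D] Ht by (simp add: mult.assoc)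
      also have "\<dots> \<le> c0 / 2 * h powr (\<alpha> * H t)"
        using ratio by (rule mult_right_mono) simp
      finally show ?thesis .
    qed
    then have "c0 / 2 * \<bar>t - s\<bar> powr (\<alpha> * H t) \<le> incr_moment \<alpha> H t s"
      using m(2) dpow by (simp add: h_def)
    ultimately show "c0 / 2 * \<bar>t - s\<bar> powr (\<alpha> * H t) \<le> incr_moment \<alpha> H t s
        \<and> incr_moment \<alpha> H t s \<le> K0 * (1 + C powr \<alpha>) * \<bar>t - s\<bar> powr (\<alpha> * H t)" by blast
  qed (use \<delta>1 \<delta>2 c0 K0 in auto)
qed

lemma incr_norm_comparable:
  fixes \<alpha> C \<gamma> Hl Hu T :: real and H :: "real \<Rightarrow> real"
  assumes a: "\<alpha> > 0" and Hl: "0 < Hl" and Hu: "Hu < 1"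
    and range: "\<forall>t\<ge>0. H t \<in> {Hl..Hu}" and C: "C \<ge> 0" and \<gamma>: "Hu < \<gamma>"
    and hol: "\<forall>t\<ge>0. \<forall>s\<ge>0. \<bar>H t - H s\<bar> \<le> C * \<bar>t - s\<bar> powr \<gamma>"
  obtains \<delta> c K where "\<delta> > 0" "c > 0" "K > 0"
    and "\<And>t s. t \<in> {0..T} \<Longrightarrow> s \<in> {0..T} \<Longrightarrow> 0 < \<bar>t - s\<bar> \<Longrightarrow> \<bar>t - s\<bar> < \<delta> \<Longrightarrow>
           c * \<bar>t - s\<bar> powr H t \<le> rhmsp_incr_norm \<alpha> H t s
           \<and> rhmsp_incr_norm \<alpha> H t s \<le> K * \<bar>t - s\<bar> powr H t"
proof -
  obtain \<delta> c K where \<delta>: "\<delta> > 0" and c: "c > 0" and K: "K \<ge> 0" and moment: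
    "\<And>t s. t \<in> {0..T} \<Longrightarrow> s \<in> {0..T} \<Longrightarrow> 0 < \<bar>t - s\<bar> \<Longrightarrow> \<bar>t - s\<bar> < \<delta> \<Longrightarrow>
       c * \<bar>t - s\<bar> powr (\<alpha> * H t) \<le> incr_moment \<alpha> H t s
       \<and> incr_moment \<alpha> H t s \<le> K * \<bar>t - s\<bar> powr (\<alpha> * H t)"
    using incr_moment_comparable[OF a Hl Hu range C \<gamma> hol] by blast
  have root: "(k * \<bar>t - s\<bar> powr (\<alpha> * H t)) powr (1 / \<alpha>) = k powr (1 / \<alpha>) * \<bar>t - s\<bar> powr H t"
    if "k \<ge> 0" for k t s
    using that a by (simp add: powr_mult powr_powr)
  show ?thesis
  proof (rule that[OF \<delta>, of "c powr (1 / \<alpha>)" "K powr (1 / \<alpha>) + 1"])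
    fix t s assume ts: "t \<in> {0..T}" "s \<in> {0..T}" "0 < \<bar>t - s\<bar>" "\<bar>t - s\<bar> < \<delta>"
    have "c powr (1 / \<alpha>) * \<bar>t - s\<bar> powr H t = (c * \<bar>t - s\<bar> powr (\<alpha> * H t)) powr (1 / \<alpha>)"
      using root[of c] c by simp
    also have "\<dots> \<le> incr_moment \<alpha> H t s powr (1 / \<alpha>)"
      using moment[OF ts] c a by (intro powr_mono2) auto
    moreover have "incr_moment \<alpha> H t s powr (1 / \<alpha>) \<le> (K * \<bar>t - s\<bar> powr (\<alpha> * H t)) powr (1 / \<alpha>)"
      using moment[OF ts] a incr_moment_nonneg by (intro powr_mono2) auto
    moreover have "\<dots> = K powr (1 / \<alpha>) * \<bar>t - s\<bar> powr H t"
      using root[of K] K by simp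
    moreover have "K powr (1 / \<alpha>) * \<bar>t - s\<bar> powr H t \<le> (K powr (1 / \<alpha>) + 1) * \<bar>t - s\<bar> powr H t"
      by (intro mult_right_mono) simp_all
    ultimately show "c powr (1 / \<alpha>) * \<bar>t - s\<bar> powr H t \<le> rhmsp_incr_norm \<alpha> H t s
           \<and> rhmsp_incr_norm \<alpha> H t s \<le> (K powr (1 / \<alpha>) + 1) * \<bar>t - s\<bar> powr H t"
      unfolding rhmsp_incr_norm_eq by linarith
  qed (use c in \<open>simp_all add: add_nonneg_pos\<close>)
qed

lemma exponent_window_comparison:
  fixes H :: "real \<Rightarrow> real" and C \<gamma> t s :: real
  assumes hol: "\<forall>t\<ge>0. \<forall>s\<ge>0. \<bar>H t - H s\<bar> \<le> C * \<bar>t - s\<bar> powr \<gamma>"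
    and C: "C \<ge> 0" and \<gamma>: "\<gamma> > 0" and ts: "t \<ge> 0" "s \<ge> 0" and h: "0 < \<bar>t - s\<bar>" "\<bar>t - s\<bar> \<le> 1"
  shows "\<bar>t - s\<bar> powr H t \<le> exp (C / \<gamma>) * \<bar>t - s\<bar> powr H_max H t s"
    and "\<bar>t - s\<bar> powr H_min H t s \<le> exp (C / \<gamma>) * \<bar>t - s\<bar> powr H t"
  using H_window_bounds[OF hol C \<gamma> ts]
  by (auto intro!: powr_exponent_shift[OF h C \<gamma>] simp: algebra_simps)

lemma rhmsp_incr_norm_self: "rhmsp_incr_norm \<alpha> H t t = 0"
  by (simp add: rhmsp_incr_norm_def)

lemma incr_norm_window_bounds:
  fixes \<alpha> C \<gamma> Hl Hu T :: real and H :: "real \<Rightarrow> real"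
  assumes a: "\<alpha> > 0" and Hl: "0 < Hl" and Hu: "Hu < 1"
    and range: "\<forall>t\<ge>0. H t \<in> {Hl..Hu}" and C: "C \<ge> 0" and \<gamma>: "Hu < \<gamma>"
    and hol: "\<forall>t\<ge>0. \<forall>s\<ge>0. \<bar>H t - H s\<bar> \<le> C * \<bar>t - s\<bar> powr \<gamma>"
  shows "\<exists>\<delta>>0. \<exists>C1>0. \<exists>C2>0. \<forall>t\<in>{0..T}. \<forall>s\<in>{0..T}. \<bar>t - s\<bar> < \<delta> \<longrightarrow>
           C1 * \<bar>t - s\<bar> powr (H_min H t s) \<le> rhmsp_incr_norm \<alpha> H t s \<and>
           rhmsp_incr_norm \<alpha> H t s \<le> C2 * \<bar>t - s\<bar> powr (H_max H t s)"
proof -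
  have \<gamma>0: "\<gamma> > 0" using range[rule_format, of 0] Hl \<gamma> by simp
  obtain \<delta> c K where \<delta>: "\<delta> > 0" and c: "c > 0" and K: "K > 0" and norm:
    "\<And>t s. t \<in> {0..T} \<Longrightarrow> s \<in> {0..T} \<Longrightarrow> 0 < \<bar>t - s\<bar> \<Longrightarrow> \<bar>t - s\<bar> < \<delta> \<Longrightarrow>
       c * \<bar>t - s\<bar> powr H t \<le> rhmsp_incr_norm \<alpha> H t s \<and> rhmsp_incr_norm \<alpha> H t s \<le> K * \<bar>t - s\<bar> powr H t"
    using incr_norm_comparable[OF a Hl Hu range C \<gamma> hol] by blast
  define E where "E = exp (C / \<gamma>)"
  have E: "E > 0" by (simp add: E_def)
  have "c / E * \<bar>t - s\<bar> powr (H_min H t s) \<le> rhmsp_incr_norm \<alpha> H t s \<and>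
      rhmsp_incr_norm \<alpha> H t s \<le> K * E * \<bar>t - s\<bar> powr (H_max H t s)"
    if t: "t \<in> {0..T}" and s: "s \<in> {0..T}" and small: "\<bar>t - s\<bar> < min \<delta> 1" for t s
  proof (cases "t = s")
    case False
    then have h: "0 < \<bar>t - s\<bar>" "\<bar>t - s\<bar> \<le> 1" using small by auto
    have "t \<ge> 0" "s \<ge> 0" using t s by auto
    note window = exponent_window_comparison[OF hol C \<gamma>0 this h, folded E_def]
    have "\<bar>t - s\<bar> < \<delta>" using small by simp
    note bounds = norm[OF t s h(1) this]
    have "c / E * \<bar>t - s\<bar> powr (H_min H t s) \<le> c / E * (E * \<bar>t - s\<bar> powr H t)"
      using window(2) c E by (intro mult_left_mono) auto
    also have "\<dots> \<le> rhmsp_incr_norm \<alpha> H t s"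
      using bounds E by simp
    moreover have "rhmsp_incr_norm \<alpha> H t s \<le> K * (E * \<bar>t - s\<bar> powr H_max H t s)"
      using bounds mult_left_mono[OF window(1), of K] K by linarith
    ultimately show ?thesis by (simp add: mult.assoc)
  qed (simp add: rhmsp_incr_norm_self)
  moreover have "min \<delta> 1 > 0" "c / E > 0" "K * E > 0" using \<delta> c K E by simp_all
  ultimately show ?thesis by blast
qed

theorem mainTheorem3:
  fixes \<alpha> T C \<gamma> :: real and H :: "real \<Rightarrow> real"
  assumes "1 < \<alpha>" and "\<alpha> < 2"
    and "bdd_below (H ` {0..})" and "bdd_above (H ` {0..})"
    and "0 < (INF t\<in>{0..}. H t)" and "(SUP t\<in>{0..}. H t) < 1"
    and "C > 0" and "\<gamma> > (SUP t\<in>{0..}. H t)"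
    and "\<forall>t\<ge>0. \<forall>s\<ge>0. \<bar>H t - H s\<bar> \<le> C * \<bar>t - s\<bar> powr \<gamma>"
    and "T > 0"
  shows "\<exists>\<delta>>0. \<exists>C1>0. \<exists>C2>0. \<forall>t\<in>{0..T}. \<forall>s\<in>{0..T}. \<bar>t - s\<bar> < \<delta> \<longrightarrow>
           C1 * \<bar>t - s\<bar> powr (H_min H t s) \<le> rhmsp_incr_norm \<alpha> H t s \<and>
           rhmsp_incr_norm \<alpha> H t s \<le> C2 * \<bar>t - s\<bar> powr (H_max H t s)"
proof -
  define Hl where "Hl = (INF t\<in>{0..}. H t)"
  define Hu where "Hu = (SUP t\<in>{0..}. H t)"
  have range: "\<forall>t\<ge>0. H t \<in> {Hl..Hu}"
    using assms(3,4) by (auto simp: Hl_def Hu_def intro: cINF_lower cSUP_upper)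
  have Hl: "0 < Hl" and Hu: "Hu < 1" and \<gamma>: "Hu < \<gamma>"
    using assms(5,6,8) by (simp_all add: Hl_def Hu_def)
  have a: "\<alpha> > 0" and C: "C \<ge> 0"
    using assms(1,7) by simp_all
  show ?thesis
    using incr_norm_window_bounds[OF a Hl Hu range C \<gamma> assms(9)] .
qed

end
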